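(* Let $s\ge1$, $L\ge1$, widths $d_0=s,d_1,\dots,d_{L+1}$, matrices $W_\ell\in\mathbb{R}^{d_{\ell+1}\times d_\ell}$ and vectors $\mathbf{v}_\ell\in\mathbb{R}^{d_{\ell+1}}$ ($\ell=0,\dots,L$), and a smooth $\sigma:\mathbb{R}\to\mathbb{R}$ applied componentwise. Suppose there are positive sequences $(\beta_j)_{j\ge1}$, $(R_\ell)_{\ell\ge1}$ and constants $\xi>0,\tau>0$ such that $\max_{1\le p\le d_1}|W_{0,p,j}|\le\beta_j$ for $j=1,\dots,s$, $\|W_\ell\|_\infty:=\max_p\sum_q|W_{\ell,p,q}|\le R_\ell$ for $\ell\ge1$, and $\sup_{x\in\mathbb{R}}|\sigma^{(n)}(x)|\le A_n:=\xi\,\tau^n\,n!$ for all $n\ge1$. Define $P_0:=1$, $P_k:=\prod_{t=1}^k(\xi\tau R_t)$ for $k\ge1$, $S_\ell:=\tau\sum_{k=0}^{\ell-1}P_k$, and $C_\ell:=\max\{\|G^{[\ell]}_\theta\|_\infty,\,P_\ell/S_\ell\}$, where $\|G^{[\ell]}_\theta\|_\infty:=\sup_{\mathbf{y}\in[0,1]^s}\max_p|G^{[\ell]}_\theta(\mathbf{y})_p|$. Then for every $1\le\ell\le L$, every component $1\le p\le d_{\ell+1}$, every multiindex $\boldsymbol{\nu}\in\mathbb{N}_0^s$ (including $\boldsymbol{\nu}=\mathbf{0}$) and every $\mathbf{y}\in[0,1]^s$: (a) the non-periodic network $G^{[0]}_\theta(\mathbf{y}):=W_0\mathbf{y}+\mathbf{v}_0$,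 $G^{[\ell]}_\theta(\mathbf{y}):=W_\ell\sigma(G^{[\ell-1]}_\theta(\mathbf{y}))+\mathbf{v}_\ell$ satisfies $$|\partial^{\boldsymbol{\nu}}G^{[\ell]}_\theta(\mathbf{y})_p|\le C_\ell\,|\boldsymbol{\nu}|!\,(S_\ell\boldsymbol{\beta})^{\boldsymbol{\nu}};$$ (b) the periodic network $G^{[0]}_\theta(\mathbf{y}):=W_0\sin(2\pi\mathbf{y})+\mathbf{v}_0$, $G^{[\ell]}_\theta(\mathbf{y}):=W_\ell\sigma(G^{[\ell-1]}_\theta(\mathbf{y}))+\mathbf{v}_\ell$ satisfies $$|\partial^{\boldsymbol{\nu}}G^{[\ell]}_\theta(\mathbf{y})_p|\le C_\ell\,(2\pi)^{|\boldsymbol{\nu}|}\sum_{\mathbf{m}\le\boldsymbol{\nu}}|\mathbf{m}|!\,(S_\ell\boldsymbol{\beta})^{\mathbf{m}}\,\mathcal{S}(\boldsymbol{\nu},\mathbf{m}).$$ (Here $C_\ell$ is defined with respect to the respective network.)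
   Context: For $\boldsymbol{\nu}\in\mathbb{N}_0^s$: $|\boldsymbol{\nu}|=\sum_j\nu_j$, $\partial^{\boldsymbol{\nu}}=\prod_j(\partial/\partial y_j)^{\nu_j}$, $(S\boldsymbol{\beta})^{\boldsymbol{\nu}}=\prod_j(S\beta_j)^{\nu_j}$, $\mathbf{m}\le\boldsymbol{\nu}$ componentwise. $\mathcal{S}(n,k)$ is the Stirling number of the second kind ($\mathcal{S}(n,0)=\delta_{n,0}$, $\mathcal{S}(n,k)=0$ for $k>n$, $\mathcal{S}(n,k)=\frac1{k!}\sum_{i=0}^k(-1)^{k-i}\binom ki i^n$ for $n\ge k$), and $\mathcal{S}(\boldsymbol{\nu},\mathbf{m})=\prod_j\mathcal{S}(\nu_j,m_j)$. The sine is applied componentwise. *)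

theory Defs
  imports "HOL-Analysis.Analysis" "HOL-Combinatorics.Stirling" "HOL-Library.FuncSet"
begin

text \<open>Vectors in R^s are functions nat => real, only indices j < s are used (0-based).
  Matrices W l are nat => nat => real, W l p q for p < d (Suc l), q < d l.\<close>

text \<open>Feed-forward network. The first layer is W_0 phi(y) + v_0 with phi applied
  componentwise (phi = id: non-periodic; phi = sin(2 pi .): periodic).\<close>
fun net :: "(real \<Rightarrow> real) \<Rightarrow> (real \<Rightarrow> real) \<Rightarrow> nat \<Rightarrow> (nat \<Rightarrow> nat)
            \<Rightarrow> (nat \<Rightarrow> nat \<Rightarrow> nat \<Rightarrow> real) \<Rightarrow> (nat \<Rightarrow> nat \<Rightarrow> real)
            \<Rightarrow> nat \<Rightarrow> (nat \<Rightarrow> real) \<Rightarrow> nat \<Rightarrow> real" where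
  "net phi \<sigma> s d W v 0 y p = (\<Sum>j<s. W 0 p j * phi (y j)) + v 0 p"
| "net phi \<sigma> s d W v (Suc l) y p =
     (\<Sum>q<d (Suc l). W (Suc l) p q * \<sigma> (net phi \<sigma> s d W v l y q)) + v (Suc l) p"

definition partial :: "nat \<Rightarrow> ((nat \<Rightarrow> real) \<Rightarrow> real) \<Rightarrow> (nat \<Rightarrow> real) \<Rightarrow> real" where
  "partial j f y = deriv (\<lambda>t. f (y(j := t))) (y j)"

fun mderiv :: "nat \<Rightarrow> (nat \<Rightarrow> nat) \<Rightarrow> ((nat \<Rightarrow> real) \<Rightarrow> real) \<Rightarrow> (nat \<Rightarrow> real) \<Rightarrow> real" where
  "mderiv 0 \<nu> f = f"
| "mderiv (Suc k) \<nu> f = (partial k ^^ \<nu> k) (mderiv k \<nu> f)"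

definition unit_cube :: "nat \<Rightarrow> (nat \<Rightarrow> real) set" where
  "unit_cube s = {y. \<forall>j<s. 0 \<le> y j \<and> y j \<le> 1}"

definition mabs :: "nat \<Rightarrow> (nat \<Rightarrow> nat) \<Rightarrow> nat" where
  "mabs s \<nu> = (\<Sum>j<s. \<nu> j)"

definition Pk :: "real \<Rightarrow> real \<Rightarrow> (nat \<Rightarrow> real) \<Rightarrow> nat \<Rightarrow> real" where
  "Pk \<xi> \<tau> R k = (\<Prod>t=1..k. \<xi> * \<tau> * R t)"

definition Sl :: "real \<Rightarrow> real \<Rightarrow> (nat \<Rightarrow> real) \<Rightarrow> nat \<Rightarrow> real" where
  "Sl \<xi> \<tau> R l = \<tau> * (\<Sum>k<l. Pk \<xi> \<tau> R k)"

definition net_supnorm :: "nat \<Rightarrow> (nat \<Rightarrow> nat) \<Rightarrow> ((nat \<Rightarrow> real) \<Rightarrow> nat \<Rightarrow> real) \<Rightarrow> nat \<Rightarrow> real" where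
  "net_supnorm s d G l = (SUP y\<in>unit_cube s. Max ((\<lambda>p. \<bar>G y p\<bar>) ` {..<d (Suc l)}))"

end

(*
  A bound on derivatives along directions j_1 ... j_n of the form n! F_n beta_(j_1) ... beta_(j_n)
  is encoded by a power series F in one variable. Such majorants are multiplied under the Leibniz
  rule and composed under Faa di Bruno's formula; the hypothesis |sigma^(k)| <= xi tau^k k! says
  that sigma is majorized by xi / (1 - tau t). If the derivatives of the l-th layer are majorized by
  P t / (1 - S t), those of sigma applied to it are majorized by xi tau P t / (1 - (S + tau P) t),
  and the row sums R_(l+1) then give the same shape with P_(l+1) = R_(l+1) xi tau P_l and
  S_(l+1) = S_l + tau P_l. Reading off coefficients yields
  |d^nu G^[l]| <= (P_l / S_l) |nu|! (S_l beta)^nu.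

  The periodic network is the non-periodic one composed with y |-> sin (2 pi y) coordinatewise.
  In one variable, d^n/dt^n K (sin (2 pi t)) = sum_r T_(n,r)(t) K^(r)(sin (2 pi t)), where T_(n,r)
  is a trigonometric polynomial bounded by (2 pi)^n S(n, r) because its recursion is that of the
  Stirling numbers of the second kind.
*)

theory Submission
  imports Defs "HOL-Computational_Algebra.Formal_Power_Series"
begin

text \<open>Since partial is defined through deriv, it obeys the rules of calculus only on
  differentiable functions. This class contains every component of the network and is closed
  under partial differentiation.\<close>
inductive_set smooth_funs :: "(real \<Rightarrow> real) \<Rightarrow> ((nat \<Rightarrow> real) \<Rightarrow> real) set" for \<sigma> where
  const: "(\<lambda>y. c) \<in> smooth_funs \<sigma>"
| coord: "(\<lambda>y. y j) \<in> smooth_funs \<sigma>"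
| add: "f \<in> smooth_funs \<sigma> \<Longrightarrow> g \<in> smooth_funs \<sigma> \<Longrightarrow> (\<lambda>y. f y + g y) \<in> smooth_funs \<sigma>"
| mult: "f \<in> smooth_funs \<sigma> \<Longrightarrow> g \<in> smooth_funs \<sigma> \<Longrightarrow> (\<lambda>y. f y * g y) \<in> smooth_funs \<sigma>"
| comp_deriv: "f \<in> smooth_funs \<sigma> \<Longrightarrow> (\<lambda>y. (deriv ^^ k) \<sigma> (f y)) \<in> smooth_funs \<sigma>"

lemma smooth_funs_comp: "f \<in> smooth_funs \<sigma> \<Longrightarrow> (\<lambda>y. \<sigma> (f y)) \<in> smooth_funs \<sigma>"
  using smooth_funs.comp_deriv[of f \<sigma> 0] by simp

lemma smooth_funs_sum:
  "finite I \<Longrightarrow> (\<And>i. i \<in> I \<Longrightarrow> f i \<in> smooth_funs \<sigma>) \<Longrightarrow> (\<lambda>y. \<Sum>i\<in>I. f i y) \<in> smooth_funs \<sigma>"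
  by (induction I rule: finite_induct) (auto intro: smooth_funs.const smooth_funs.add)

lemma partial_const: "partial j (\<lambda>y. c) = (\<lambda>y. 0)"
  unfolding partial_def by simp

lemma partial_coord: "partial j (\<lambda>y. y i) = (\<lambda>y. if i = j then 1 else 0)"
  unfolding partial_def fun_eq_iff by auto

locale smooth_activation =
  fixes \<sigma> :: "real \<Rightarrow> real"
  assumes smooth: "\<And>n x. ((deriv ^^ n) \<sigma> has_real_derivative (deriv ^^ Suc n) \<sigma> x) (at x)"
begin

lemma smooth_funs_has_partial:
  assumes "f \<in> smooth_funs \<sigma>"
  shows "\<exists>f'\<in>smooth_funs \<sigma>. \<forall>y. ((\<lambda>t. f (y(j:=t))) has_real_derivative f' y) (at (y j))"
  using assms
proof induction
  case (const c)
  show ?case by (intro bexI[of _ "\<lambda>y. 0"]) (auto intro: smooth_funs.const)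
next
  case (coord i)
  show ?case
    by (intro bexI[of _ "\<lambda>y. if i = j then 1 else 0"])
       (auto intro!: smooth_funs.const derivative_eq_intros)
next
  case (add f g)
  then obtain f' g' where "f' \<in> smooth_funs \<sigma>" "g' \<in> smooth_funs \<sigma>"
    "\<forall>y. ((\<lambda>t. f (y(j:=t))) has_real_derivative f' y) (at (y j))"
    "\<forall>y. ((\<lambda>t. g (y(j:=t))) has_real_derivative g' y) (at (y j))" by blast
  then show ?case
    by (intro bexI[of _ "\<lambda>y. f' y + g' y"] allI DERIV_add) (blast intro: smooth_funs.add)+
next
  case (mult f g)
  then obtain f' g' where "f' \<in> smooth_funs \<sigma>" "g' \<in> smooth_funs \<sigma>"
    and f': "\<forall>y. ((\<lambda>t. f (y(j:=t))) has_real_derivative f' y) (at (y j))"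
    and g': "\<forall>y. ((\<lambda>t. g (y(j:=t))) has_real_derivative g' y) (at (y j))" by blast
  moreover have
    "((\<lambda>t. f (y(j:=t)) * g (y(j:=t))) has_real_derivative f' y * g y + g' y * f y) (at (y j))" for y
    using DERIV_mult[OF f'[rule_format, of y] g'[rule_format, of y]] by simp
  ultimately show ?case
    by (intro bexI[of _ "\<lambda>y. f' y * g y + g' y * f y"] smooth_funs.add smooth_funs.mult mult.hyps)
       blast+
next
  case (comp_deriv f k)
  then obtain f' where "f' \<in> smooth_funs \<sigma>"
    and f': "\<forall>y. ((\<lambda>t. f (y(j:=t))) has_real_derivative f' y) (at (y j))" by blast
  moreover have "((\<lambda>t. (deriv ^^ k) \<sigma> (f (y(j := t)))) has_real_derivative
      (deriv ^^ Suc k) \<sigma> (f y) * f' y) (at (y j))" for y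
    using DERIV_chain2[OF smooth f'[rule_format, of y]] by simp
  ultimately show ?case
    by (intro bexI[of _ "\<lambda>y. (deriv ^^ Suc k) \<sigma> (f y) * f' y"]
        smooth_funs.mult smooth_funs.comp_deriv comp_deriv.hyps) blast+
qed

lemma partial_in_smooth_funs: "f \<in> smooth_funs \<sigma> \<Longrightarrow> partial j f \<in> smooth_funs \<sigma>"
  and has_real_derivative_partial:
    "f \<in> smooth_funs \<sigma> \<Longrightarrow> ((\<lambda>t. f (y(j:=t))) has_real_derivative partial j f y) (at (y j))"
proof -
  assume "f \<in> smooth_funs \<sigma>"
  then obtain f' where f': "f' \<in> smooth_funs \<sigma>"
    "\<forall>y. ((\<lambda>t. f (y(j:=t))) has_real_derivative f' y) (at (y j))"
    using smooth_funs_has_partial by blast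
  then have "partial j f = f'"
    by (auto simp: partial_def fun_eq_iff intro!: DERIV_imp_deriv)
  with f' show "partial j f \<in> smooth_funs \<sigma>"
    "((\<lambda>t. f (y(j:=t))) has_real_derivative partial j f y) (at (y j))" by auto
qed

lemma partial_add: "f \<in> smooth_funs \<sigma> \<Longrightarrow> g \<in> smooth_funs \<sigma> \<Longrightarrow>
    partial j (\<lambda>y. f y + g y) = (\<lambda>y. partial j f y + partial j g y)"
  unfolding fun_eq_iff partial_def[of j "\<lambda>y. f y + g y"]
  by (auto intro!: DERIV_imp_deriv DERIV_add has_real_derivative_partial)

lemma partial_mult: "f \<in> smooth_funs \<sigma> \<Longrightarrow> g \<in> smooth_funs \<sigma> \<Longrightarrow>
    partial j (\<lambda>y. f y * g y) = (\<lambda>y. partial j f y * g y + f y * partial j g y)"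
  unfolding fun_eq_iff partial_def[of j "\<lambda>y. f y * g y"]
  by (auto intro!: DERIV_imp_deriv derivative_eq_intros has_real_derivative_partial)

lemma partial_cmult: "f \<in> smooth_funs \<sigma> \<Longrightarrow> partial j (\<lambda>y. c * f y) = (\<lambda>y. c * partial j f y)"
  by (simp add: partial_mult smooth_funs.const partial_const)

lemma partial_sum: "finite I \<Longrightarrow> (\<And>i. i \<in> I \<Longrightarrow> f i \<in> smooth_funs \<sigma>) \<Longrightarrow>
    partial j (\<lambda>y. \<Sum>i\<in>I. f i y) = (\<lambda>y. \<Sum>i\<in>I. partial j (f i) y)"
  by (induction I rule: finite_induct) (simp_all add: partial_const partial_add smooth_funs_sum)

lemma partial_comp_deriv: "f \<in> smooth_funs \<sigma> \<Longrightarrow>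
    partial j (\<lambda>y. (deriv ^^ k) \<sigma> (f y)) = (\<lambda>y. (deriv ^^ Suc k) \<sigma> (f y) * partial j f y)"
proof
  fix y assume "f \<in> smooth_funs \<sigma>"
  from DERIV_chain2[OF smooth has_real_derivative_partial[OF this, of y j]]
  show "partial j (\<lambda>y. (deriv ^^ k) \<sigma> (f y)) y = (deriv ^^ Suc k) \<sigma> (f y) * partial j f y"
    unfolding partial_def by (intro DERIV_imp_deriv) simp
qed

lemma continuous_on_activation: "continuous_on UNIV \<sigma>"
  using smooth[of 0] by (auto intro!: continuous_at_imp_continuous_on DERIV_isCont)

end

fun partials :: "nat list \<Rightarrow> ((nat \<Rightarrow> real) \<Rightarrow> real) \<Rightarrow> (nat \<Rightarrow> real) \<Rightarrow> real" where
  "partials [] f = f"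
| "partials (j # js) f = partial j (partials js f)"

lemma partials_snoc: "partials (js @ [j]) f = partials js (partial j f)"
  by (induction js) auto

lemma partials_const: "js \<noteq> [] \<Longrightarrow> partials js (\<lambda>y. c) = (\<lambda>y. 0)"
proof (induction js)
  case (Cons j js)
  then show ?case by (cases "js = []") (simp_all add: partial_const)
qed simp

fun dir_list :: "(nat \<Rightarrow> nat) \<Rightarrow> nat \<Rightarrow> nat list" where
  "dir_list \<nu> 0 = []"
| "dir_list \<nu> (Suc k) = replicate (\<nu> k) k @ dir_list \<nu> k"

lemma mderiv_eq_partials: "mderiv k \<nu> f = partials (dir_list \<nu> k) f"
proof -
  have "(partial k ^^ n) (partials js f) = partials (replicate n k @ js) f" for n k js
    by (induction n) auto
  then show ?thesis by (induction k) auto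
qed

lemma length_dir_list: "length (dir_list \<nu> k) = (\<Sum>j<k. \<nu> j)"
  by (induction k) auto

lemma prod_list_dir_list: "prod_list (map \<beta> (dir_list \<nu> k)) = (\<Prod>j<k. \<beta> j ^ \<nu> j)"
  by (induction k) (auto simp: mult.commute)

lemma mderiv_cong: "(\<And>j. j < k \<Longrightarrow> \<nu> j = \<mu> j) \<Longrightarrow> mderiv k \<nu> f = mderiv k \<mu> f"
proof -
  assume "\<And>j. j < k \<Longrightarrow> \<nu> j = \<mu> j"
  then have "dir_list \<nu> k = dir_list \<mu> k" by (induction k) auto
  then show ?thesis by (simp add: mderiv_eq_partials)
qed

context smooth_activation begin

lemma partials_in_smooth_funs: "f \<in> smooth_funs \<sigma> \<Longrightarrow> partials js f \<in> smooth_funs \<sigma>"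
  by (induction js) (auto intro: partial_in_smooth_funs)

lemma mderiv_in_smooth_funs: "f \<in> smooth_funs \<sigma> \<Longrightarrow> mderiv k \<nu> f \<in> smooth_funs \<sigma>"
  unfolding mderiv_eq_partials by (rule partials_in_smooth_funs)

lemma partials_add: "f \<in> smooth_funs \<sigma> \<Longrightarrow> g \<in> smooth_funs \<sigma> \<Longrightarrow>
    partials js (\<lambda>y. f y + g y) = (\<lambda>y. partials js f y + partials js g y)"
  by (induction js) (auto simp: partial_add partials_in_smooth_funs)

lemma partials_sum: "finite I \<Longrightarrow> (\<And>i. i \<in> I \<Longrightarrow> f i \<in> smooth_funs \<sigma>) \<Longrightarrow>
    partials js (\<lambda>y. \<Sum>i\<in>I. f i y) = (\<lambda>y. \<Sum>i\<in>I. partials js (f i) y)"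
  by (induction js) (auto simp: partial_sum partials_in_smooth_funs)

lemma partials_cmult: "f \<in> smooth_funs \<sigma> \<Longrightarrow> partials js (\<lambda>y. c * f y) = (\<lambda>y. c * partials js f y)"
  by (induction js) (auto simp: partial_cmult partials_in_smooth_funs)

end

definition majorant :: "(nat \<Rightarrow> real) \<Rightarrow> real fps \<Rightarrow> nat list \<Rightarrow> real" where
  "majorant \<beta> F js = fact (length js) * fps_nth F (length js) * prod_list (map \<beta> js)"

lemma majorant_Nil: "majorant \<beta> F [] = fps_nth F 0"
  unfolding majorant_def by simp

lemma majorant_snoc: "majorant \<beta> F (js @ [j]) = majorant \<beta> (fps_const (\<beta> j) * fps_deriv F) js"
  unfolding majorant_def by (simp add: algebra_simps)

lemma majorant_add: "majorant \<beta> (F + H) js = majorant \<beta> F js + majorant \<beta> H js"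
  unfolding majorant_def by (simp add: algebra_simps)

lemma majorant_nonneg: "(\<And>j. \<beta> j \<ge> 0) \<Longrightarrow> fps_nth F (length js) \<ge> 0 \<Longrightarrow> majorant \<beta> F js \<ge> 0"
  unfolding majorant_def by (auto intro!: mult_nonneg_nonneg prod_list_nonneg)

lemma (in smooth_activation) partials_mult_majorant:
  assumes "f \<in> smooth_funs \<sigma>" "g \<in> smooth_funs \<sigma>"
    and "\<And>js y. length js \<le> n \<Longrightarrow> \<bar>partials js f y\<bar> \<le> majorant \<beta> F js"
    and "\<And>js y. length js \<le> n \<Longrightarrow> \<bar>partials js g y\<bar> \<le> majorant \<beta> H js"
    and "length js \<le> n"
  shows "\<bar>partials js (\<lambda>y. f y * g y) y\<bar> \<le> majorant \<beta> (F * H) js"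
  using assms
proof (induction n arbitrary: f g F H js)
  case 0
  then have "\<bar>f y\<bar> \<le> fps_nth F 0" "\<bar>g y\<bar> \<le> fps_nth H 0"
    using "0.prems"(3,4)[of "[]" y] by (simp_all add: majorant_Nil)
  then have "\<bar>f y * g y\<bar> \<le> fps_nth F 0 * fps_nth H 0"
    unfolding abs_mult by (intro mult_mono) auto
  with "0.prems"(5) show ?case by (simp add: majorant_Nil)
next
  case (Suc n)
  note f = \<open>f \<in> smooth_funs \<sigma>\<close> and g = \<open>g \<in> smooth_funs \<sigma>\<close>
  have f_n: "\<bar>partials js f y\<bar> \<le> majorant \<beta> F js"
    and g_n: "\<bar>partials js g y\<bar> \<le> majorant \<beta> H js" if "length js \<le> n" for js y
    using that Suc.prems(3,4) by simp_all
  show ?case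
  proof (cases "length js \<le> n")
    case True
    with Suc.IH[OF f g f_n g_n] show ?thesis by blast
  next
    case False
    then obtain js' j where js: "js = js' @ [j]" and len: "length js' \<le> n"
      using Suc.prems(5) by (cases js rule: rev_cases) auto
    have df: "\<bar>partials js'' (partial j f) y'\<bar> \<le> majorant \<beta> (fps_const (\<beta> j) * fps_deriv F) js''"
      and dg: "\<bar>partials js'' (partial j g) y'\<bar> \<le> majorant \<beta> (fps_const (\<beta> j) * fps_deriv H) js''"
      if "length js'' \<le> n" for js'' y'
      using that Suc.prems(3,4)[of "js'' @ [j]" y'] by (simp_all add: partials_snoc majorant_snoc)
    have "partials js (\<lambda>y. f y * g y) y
        = partials js' (\<lambda>y. partial j f y * g y) y + partials js' (\<lambda>y. f y * partial j g y) y"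
      by (simp add: js partials_snoc partial_mult[OF f g] partials_add
          smooth_funs.mult partial_in_smooth_funs f g)
    also have "\<bar>\<dots>\<bar> \<le> majorant \<beta> (fps_const (\<beta> j) * fps_deriv F * H) js'
                     + majorant \<beta> (F * (fps_const (\<beta> j) * fps_deriv H)) js'"
      using Suc.IH[OF partial_in_smooth_funs[OF f] g df g_n len]
        Suc.IH[OF f partial_in_smooth_funs[OF g] f_n dg len] by linarith
    also have "\<dots> = majorant \<beta> (F * H) js"
      by (simp add: js majorant_snoc majorant_add[symmetric] algebra_simps)
    finally show ?thesis .
  qed
qed

text \<open>The k-th derivative of \<xi> / (1 - \<tau> t), which majorizes the k-th derivative of \<sigma>,
  composed with G.\<close>
definition comp_majorant :: "real \<Rightarrow> real \<Rightarrow> real fps \<Rightarrow> nat \<Rightarrow> real fps" where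
  "comp_majorant \<xi> \<tau> G k = fps_const (\<xi> * \<tau> ^ k * fact k) * inverse (1 - fps_const \<tau> * G) ^ Suc k"

lemma comp_majorant_nth_0:
  "fps_nth G 0 = 0 \<Longrightarrow> fps_nth (comp_majorant \<xi> \<tau> G k) 0 = \<xi> * \<tau> ^ k * fact k"
  unfolding comp_majorant_def by (simp add: fps_nth_power_0)

lemma fps_deriv_comp_majorant:
  assumes "fps_nth G 0 = 0"
  shows "fps_deriv (comp_majorant \<xi> \<tau> G k) = comp_majorant \<xi> \<tau> G (Suc k) * fps_deriv G"
proof -
  define X where "X = inverse (1 - fps_const \<tau> * G)"
  have dX: "fps_deriv X = fps_const \<tau> * fps_deriv G * X ^ 2"
    unfolding X_def using assms by (subst fps_inverse_deriv) simp_all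
  have "fps_deriv (comp_majorant \<xi> \<tau> G k)
      = fps_const (\<xi> * \<tau> ^ k * fact k) * (fps_const (of_nat (Suc k)) * fps_deriv X * X ^ k)"
    unfolding comp_majorant_def X_def[symmetric] by (simp add: fps_deriv_power del: power_Suc)
  also have "\<dots> = fps_const (\<xi> * \<tau> ^ k * fact k * of_nat (Suc k) * \<tau>) * X ^ Suc (Suc k)
      * fps_deriv G"
    unfolding dX fps_const_mult[symmetric] by (simp add: algebra_simps power2_eq_square)
  also have "\<xi> * \<tau> ^ k * fact k * of_nat (Suc k) * \<tau> = \<xi> * \<tau> ^ Suc k * fact (Suc k)"
    by (simp add: algebra_simps)
  finally show ?thesis
    unfolding comp_majorant_def X_def .
qed

lemma (in smooth_activation) partials_comp_majorant:
  assumes g: "g \<in> smooth_funs \<sigma>" and H0: "fps_nth H 0 = 0"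
    and g_bound: "\<And>js y. js \<noteq> [] \<Longrightarrow> \<bar>partials js g y\<bar> \<le> majorant \<beta> H js"
    and \<sigma>_bound: "\<And>n x. n \<ge> 1 \<Longrightarrow> \<bar>(deriv ^^ n) \<sigma> x\<bar> \<le> \<xi> * \<tau> ^ n * fact n"
    and "k \<ge> 1 \<or> js \<noteq> []"
  shows "\<bar>partials js (\<lambda>y. (deriv ^^ k) \<sigma> (g y)) y\<bar> \<le> majorant \<beta> (comp_majorant \<xi> \<tau> H k) js"
  using assms(5)
proof (induction "length js" arbitrary: js k y rule: less_induct)
  case less
  show ?case
  proof (cases js rule: rev_cases)
    case Nil
    with less.prems \<sigma>_bound show ?thesis by (simp add: majorant_Nil comp_majorant_nth_0[OF H0])
  next
    case (snoc js' j)
    have IH: "\<bar>partials js'' (\<lambda>y. (deriv ^^ Suc k) \<sigma> (g y)) y'\<bar>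
        \<le> majorant \<beta> (comp_majorant \<xi> \<tau> H (Suc k)) js''" if "length js'' \<le> length js'" for js'' y'
      using less.hyps[of js'' "Suc k"] that snoc by simp
    have dg: "\<bar>partials js'' (partial j g) y'\<bar> \<le> majorant \<beta> (fps_const (\<beta> j) * fps_deriv H) js''"
      for js'' y'
      using g_bound[of "js'' @ [j]" y'] by (simp add: partials_snoc majorant_snoc)
    have "\<bar>partials js' (\<lambda>y. (deriv ^^ Suc k) \<sigma> (g y) * partial j g y) y\<bar>
        \<le> majorant \<beta> (comp_majorant \<xi> \<tau> H (Suc k) * (fps_const (\<beta> j) * fps_deriv H)) js'"
      by (rule partials_mult_majorant[OF smooth_funs.comp_deriv[OF g] partial_in_smooth_funs[OF g]
            IH dg order.refl])
    also have "\<dots> = majorant \<beta> (comp_majorant \<xi> \<tau> H k) js"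
      by (simp add: snoc majorant_snoc fps_deriv_comp_majorant[OF H0] algebra_simps)
    finally show ?thesis
      by (simp add: snoc partials_snoc partial_comp_deriv[OF g])
  qed
qed

definition geom_fps :: "real \<Rightarrow> real fps" where
  "geom_fps c = Abs_fps (\<lambda>n. c ^ n)"

definition geom_majorant :: "real \<Rightarrow> real \<Rightarrow> real fps" where
  "geom_majorant P S = fps_const P * (fps_X * geom_fps S)"

lemma geom_majorant_nth: "fps_nth (geom_majorant P S) n = (if n = 0 then 0 else P * S ^ (n - 1))"
  unfolding geom_majorant_def geom_fps_def by simp

lemma geom_fps_inverse: "geom_fps c * (1 - fps_const c * fps_X) = 1"
proof (rule fps_ext)
  fix n
  show "fps_nth (geom_fps c * (1 - fps_const c * fps_X)) n = fps_nth 1 n"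
    unfolding ring_distribs
    by (cases n) (simp_all add: geom_fps_def mult.commute[of _ fps_X] mult.assoc[symmetric])
qed

lemma inverse_one_minus_geom_majorant:
  "inverse (1 - fps_const \<tau> * geom_majorant P S) = (1 - fps_const S * fps_X) * geom_fps (S + \<tau> * P)"
proof (rule fps_inverse_unique)
  have "(1 - fps_const \<tau> * geom_majorant P S) * (1 - fps_const S * fps_X)
      = (1 - fps_const S * fps_X)
        - fps_const (\<tau> * P) * fps_X * (geom_fps S * (1 - fps_const S * fps_X))"
    unfolding geom_majorant_def fps_const_mult[symmetric] by algebra
  also have "\<dots> = 1 - fps_const (S + \<tau> * P) * fps_X"
    unfolding geom_fps_inverse fps_const_add[symmetric] fps_const_mult[symmetric] by algebra
  finally show "(1 - fps_const \<tau> * geom_majorant P S)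
      * ((1 - fps_const S * fps_X) * geom_fps (S + \<tau> * P)) = 1"
    using geom_fps_inverse[of "S + \<tau> * P"] by (metis mult.assoc mult.commute)
qed

lemma comp_majorant_geom_majorant_nth:
  "fps_nth (comp_majorant \<xi> \<tau> (geom_majorant P S) 0) n
     = (if n = 0 then \<xi> else fps_nth (geom_majorant (\<xi> * \<tau> * P) (S + \<tau> * P)) n)"
proof -
  have "comp_majorant \<xi> \<tau> (geom_majorant P S) 0
      = fps_const \<xi> * ((1 - fps_const S * fps_X) * geom_fps (S + \<tau> * P))"
    unfolding comp_majorant_def inverse_one_minus_geom_majorant by simp
  moreover have "(S + \<tau> * P) ^ Suc m - S * (S + \<tau> * P) ^ m = \<tau> * P * (S + \<tau> * P) ^ m" for m
    by (simp add: algebra_simps)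
  ultimately show ?thesis
    by (cases n) (simp_all add: geom_fps_def geom_majorant_nth ring_distribs mult.assoc)
qed

lemma (in smooth_activation) partials_comp_geom_majorant:
  assumes g: "g \<in> smooth_funs \<sigma>"
    and g_bound: "\<And>js y. js \<noteq> [] \<Longrightarrow> \<bar>partials js g y\<bar> \<le> majorant \<beta> (geom_majorant P S) js"
    and \<sigma>_bound: "\<And>n x. n \<ge> 1 \<Longrightarrow> \<bar>(deriv ^^ n) \<sigma> x\<bar> \<le> \<xi> * \<tau> ^ n * fact n"
    and js: "js \<noteq> []"
  shows "\<bar>partials js (\<lambda>y. \<sigma> (g y)) y\<bar> \<le> majorant \<beta> (geom_majorant (\<xi> * \<tau> * P) (S + \<tau> * P)) js"
proof -
  have "\<bar>partials js (\<lambda>y. (deriv ^^ 0) \<sigma> (g y)) y\<bar>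
      \<le> majorant \<beta> (comp_majorant \<xi> \<tau> (geom_majorant P S) 0) js"
    using partials_comp_majorant[OF g _ g_bound \<sigma>_bound, where k = 0] js
    by (simp add: geom_majorant_nth)
  also have "\<dots> = majorant \<beta> (geom_majorant (\<xi> * \<tau> * P) (S + \<tau> * P)) js"
    using js by (simp add: majorant_def comp_majorant_geom_majorant_nth)
  finally show ?thesis by simp
qed

lemma Pk_0: "Pk \<xi> \<tau> R 0 = 1"
  unfolding Pk_def by simp

lemma Pk_Suc: "Pk \<xi> \<tau> R (Suc l) = R (Suc l) * (\<xi> * \<tau> * Pk \<xi> \<tau> R l)"
  unfolding Pk_def by (simp add: prod.nat_ivl_Suc' mult_ac)

lemma Sl_0: "Sl \<xi> \<tau> R 0 = 0"
  unfolding Sl_def by simp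

lemma Sl_Suc: "Sl \<xi> \<tau> R (Suc l) = Sl \<xi> \<tau> R l + \<tau> * Pk \<xi> \<tau> R l"
  unfolding Sl_def by (simp add: algebra_simps)

lemma Pk_pos: "\<xi> > 0 \<Longrightarrow> \<tau> > 0 \<Longrightarrow> (\<And>t. t \<ge> 1 \<Longrightarrow> R t > 0) \<Longrightarrow> Pk \<xi> \<tau> R l > 0"
  unfolding Pk_def by (auto intro!: prod_pos)

lemma Sl_nonneg: "\<xi> > 0 \<Longrightarrow> \<tau> > 0 \<Longrightarrow> (\<And>t. t \<ge> 1 \<Longrightarrow> R t > 0) \<Longrightarrow> Sl \<xi> \<tau> R l \<ge> 0"
  unfolding Sl_def using Pk_pos by (metis less_imp_le mult_nonneg_nonneg sum_nonneg)

lemma Sl_pos: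
  assumes "\<xi> > 0" "\<tau> > 0" "\<And>t. t \<ge> 1 \<Longrightarrow> R t > 0" "l \<ge> 1"
  shows "Sl \<xi> \<tau> R l > 0"
proof -
  have "Pk \<xi> \<tau> R k \<ge> 0" for k
    using Pk_pos[OF assms(1-3)] by (simp add: less_imp_le)
  have "0 < \<tau> * Pk \<xi> \<tau> R 0" using assms(2) by (simp add: Pk_0)
  also have "\<dots> \<le> Sl \<xi> \<tau> R l"
    unfolding Sl_def using assms(2,4) \<open>\<And>k. Pk \<xi> \<tau> R k \<ge> 0\<close>
    by (intro mult_left_mono member_le_sum) auto
  finally show ?thesis .
qed

lemma net_eq_net_id: "net \<phi> \<sigma> s d W v l y p = net (\<lambda>x. x) \<sigma> s d W v l (\<lambda>j. \<phi> (y j)) p"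
  by (induction l arbitrary: p) auto

lemma (in smooth_activation) net_id_in_smooth_funs:
  "(\<lambda>y. net (\<lambda>x. x) \<sigma> s d W v l y p) \<in> smooth_funs \<sigma>"
proof (induction l arbitrary: p)
  case 0
  show ?case
    by (simp, intro smooth_funs.intros smooth_funs_sum) simp_all
next
  case (Suc l)
  show ?case
    by (simp, intro smooth_funs.intros smooth_funs_sum smooth_funs_comp Suc.IH) simp
qed

lemma abs_sum_mult_add_le:
  fixes w x :: "nat \<Rightarrow> real"
  assumes "\<And>q. q < n \<Longrightarrow> \<bar>x q\<bar> \<le> M"
  shows "\<bar>(\<Sum>q<n. w q * x q) + b\<bar> \<le> (\<Sum>q<n. \<bar>w q\<bar>) * M + \<bar>b\<bar>"
proof -
  have "\<bar>(\<Sum>q<n. w q * x q) + b\<bar> \<le> (\<Sum>q<n. \<bar>w q * x q\<bar>) + \<bar>b\<bar>"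
    by (rule order_trans[OF abs_triangle_ineq]) simp
  also have "\<dots> \<le> (\<Sum>q<n. \<bar>w q\<bar> * M) + \<bar>b\<bar>"
    using assms by (auto simp: abs_mult intro!: sum_mono mult_left_mono)
  finally show ?thesis by (simp add: sum_distrib_right)
qed

lemma net_bounded:
  assumes \<sigma>: "continuous_on UNIV \<sigma>" and \<phi>: "\<forall>y\<in>Y. \<forall>j<s. \<bar>\<phi> (y j)\<bar> \<le> 1"
  shows "\<exists>K. \<forall>q<d (Suc l). \<forall>y\<in>Y. \<bar>net \<phi> \<sigma> s d W v l y q\<bar> \<le> K"
proof (induction l)
  case 0
  let ?K = "\<Sum>q<d 1. (\<Sum>j<s. \<bar>W 0 q j\<bar>) * 1 + \<bar>v 0 q\<bar>"
  have "\<bar>net \<phi> \<sigma> s d W v 0 y q\<bar> \<le> ?K" if "q < d 1" "y \<in> Y" for q y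
  proof -
    have "\<bar>net \<phi> \<sigma> s d W v 0 y q\<bar> \<le> (\<Sum>j<s. \<bar>W 0 q j\<bar>) * 1 + \<bar>v 0 q\<bar>"
      unfolding net.simps by (rule abs_sum_mult_add_le) (use \<phi> that in auto)
    also have "\<dots> \<le> ?K"
      using that by (intro member_le_sum) auto
    finally show ?thesis .
  qed
  then show ?case by auto
next
  case (Suc l)
  then obtain K where K: "\<And>q y. q < d (Suc l) \<Longrightarrow> y \<in> Y \<Longrightarrow> \<bar>net \<phi> \<sigma> s d W v l y q\<bar> \<le> K"
    by blast
  have "compact (\<sigma> ` {-K..K})"
    by (rule compact_continuous_image[OF continuous_on_subset[OF \<sigma>]]) auto
  then have "bounded (\<sigma> ` {-K..K})"
    by (rule compact_imp_bounded)
  then obtain M where M_pos: "M > 0" and M_bound: "\<forall>z\<in>\<sigma> ` {-K..K}. norm z \<le> M"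
    unfolding bounded_pos by blast
  have M: "\<bar>\<sigma> x\<bar> \<le> M" if "\<bar>x\<bar> \<le> K" for x
    using M_bound that by (simp add: abs_le_iff)
  let ?K = "\<Sum>q<d (Suc (Suc l)). (\<Sum>q'<d (Suc l). \<bar>W (Suc l) q q'\<bar>) * M + \<bar>v (Suc l) q\<bar>"
  have "\<bar>net \<phi> \<sigma> s d W v (Suc l) y q\<bar> \<le> ?K" if "q < d (Suc (Suc l))" "y \<in> Y" for q y
  proof -
    have "\<bar>net \<phi> \<sigma> s d W v (Suc l) y q\<bar> \<le> (\<Sum>q'<d (Suc l). \<bar>W (Suc l) q q'\<bar>) * M + \<bar>v (Suc l) q\<bar>"
      unfolding net.simps by (rule abs_sum_mult_add_le) (use K M that in simp)
    also have "\<dots> \<le> ?K"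
      using that M_pos
      by (intro member_le_sum add_nonneg_nonneg mult_nonneg_nonneg sum_nonneg) auto
    finally show ?thesis .
  qed
  then show ?case by auto
qed

lemma abs_le_net_supnorm:
  assumes "\<And>y q. y \<in> unit_cube s \<Longrightarrow> q < d (Suc l) \<Longrightarrow> \<bar>F y q\<bar> \<le> K"
    and y: "y \<in> unit_cube s" and p: "p < d (Suc l)"
  shows "\<bar>F y p\<bar> \<le> net_supnorm s d F l"
proof -
  have "\<bar>F y p\<bar> \<le> Max ((\<lambda>p. \<bar>F y p\<bar>) ` {..<d (Suc l)})"
    using p by (intro Max_ge) auto
  also have "\<dots> \<le> net_supnorm s d F l"
    unfolding net_supnorm_def
  proof (rule cSUP_upper[OF y])
    show "bdd_above ((\<lambda>y. Max ((\<lambda>p. \<bar>F y p\<bar>) ` {..<d (Suc l)})) ` unit_cube s)"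
      using assms p
      by (intro bdd_aboveI2[of _ _ K] Max.boundedI) auto
  qed
  finally show ?thesis .
qed

lemma abs_net_le_net_supnorm:
  assumes "continuous_on UNIV \<sigma>" "\<forall>y\<in>unit_cube s. \<forall>j<s. \<bar>\<phi> (y j)\<bar> \<le> 1"
    and "y \<in> unit_cube s" "p < d (Suc l)"
  shows "\<bar>net \<phi> \<sigma> s d W v l y p\<bar> \<le> net_supnorm s d (net \<phi> \<sigma> s d W v l) l"
proof -
  obtain K where "\<forall>q<d (Suc l). \<forall>y\<in>unit_cube s. \<bar>net \<phi> \<sigma> s d W v l y q\<bar> \<le> K"
    using net_bounded[OF assms(1,2)] by blast
  with assms(3,4) show ?thesis by (intro abs_le_net_supnorm) auto
qed

text \<open>The phases make the class closed under differentiation, since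
  the derivative of cos (2 \<pi> t + a) is 2 \<pi> cos (2 \<pi> t + a + \<pi> / 2).\<close>
inductive trig_hom :: "nat \<Rightarrow> real \<Rightarrow> (real \<Rightarrow> real) \<Rightarrow> bool" where
  zero: "N \<ge> 0 \<Longrightarrow> trig_hom m N (\<lambda>t. 0)"
| const: "trig_hom 0 \<bar>c\<bar> (\<lambda>t. c)"
| cos: "trig_hom m N f \<Longrightarrow> trig_hom (Suc m) N (\<lambda>t. cos (2 * pi * t + a) * f t)"
| add: "trig_hom m N1 f \<Longrightarrow> trig_hom m N2 g \<Longrightarrow> trig_hom m (N1 + N2) (\<lambda>t. f t + g t)"
| scale: "trig_hom m N f \<Longrightarrow> trig_hom m (\<bar>c\<bar> * N) (\<lambda>t. c * f t)"
| mono: "trig_hom m N f \<Longrightarrow> N \<le> N' \<Longrightarrow> trig_hom m N' f"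

lemma trig_hom_bound: "trig_hom m N f \<Longrightarrow> \<bar>f t\<bar> \<le> N"
proof (induction rule: trig_hom.induct)
  case (cos m N f a)
  have "\<bar>cos (2 * pi * t + a) * f t\<bar> \<le> 1 * N"
    unfolding abs_mult by (intro mult_mono cos.IH) auto
  then show ?case by simp
next
  case (scale m N f c)
  then show ?case by (simp add: abs_mult mult_left_mono)
qed auto

lemma trig_hom_cos_mult_has_derivative:
  assumes f: "trig_hom m N f" and f': "trig_hom m (2 * pi * m * N) f'"
    and has_f': "\<forall>t. (f has_real_derivative f' t) (at t)"
  shows "\<exists>g. trig_hom (Suc m) (2 * pi * Suc m * N) g
    \<and> (\<forall>t. ((\<lambda>t. cos (2 * pi * t + a) * f t) has_real_derivative g t) (at t))"
proof -
  define g where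
    "g t = 2 * pi * (cos (2 * pi * t + (a + pi / 2)) * f t) + cos (2 * pi * t + a) * f' t" for t
  have "trig_hom (Suc m) (\<bar>2 * pi\<bar> * N + 2 * pi * m * N) g"
    unfolding g_def by (intro trig_hom.add trig_hom.scale trig_hom.cos f f')
  then have "trig_hom (Suc m) (2 * pi * Suc m * N) g"
    by (rule trig_hom.mono) (simp add: algebra_simps)
  moreover have "((\<lambda>t. cos (2 * pi * t + a) * f t) has_real_derivative g t) (at t)" for t
  proof -
    have "- sin (2 * pi * t + a) = cos (2 * pi * t + (a + pi / 2))"
      by (simp add: minus_sin_cos_eq add.assoc)
    with has_f' show ?thesis
      unfolding g_def by (auto intro!: derivative_eq_intros simp: algebra_simps)
  qed
  ultimately show ?thesis by blast
qed

lemma trig_hom_has_derivative: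
  "trig_hom m N f \<Longrightarrow> \<exists>f'. trig_hom m (2 * pi * m * N) f' \<and> (\<forall>t. (f has_real_derivative f' t) (at t))"
proof (induction rule: trig_hom.induct)
  case (zero N m)
  then show ?case by (intro exI[of _ "\<lambda>t. 0"]) (auto intro!: trig_hom.zero)
next
  case (const c)
  then show ?case by (intro exI[of _ "\<lambda>t. 0"]) (auto intro!: trig_hom.zero)
next
  case (cos m N f a)
  then obtain f' where "trig_hom m (2 * pi * m * N) f'" "\<forall>t. (f has_real_derivative f' t) (at t)"
    by blast
  from trig_hom_cos_mult_has_derivative[OF cos.hyps this] show ?case by blast
next
  case (add m N1 f N2 g)
  then obtain f' g' where
    "trig_hom m (2 * pi * m * N1) f'" "\<forall>t. (f has_real_derivative f' t) (at t)"
    "trig_hom m (2 * pi * m * N2) g'" "\<forall>t. (g has_real_derivative g' t) (at t)" by blast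
  then show ?case
    by (intro exI[of _ "\<lambda>t. f' t + g' t"])
       (auto intro!: DERIV_add simp: ring_distribs dest: trig_hom.add)
next
  case (scale m N f c)
  then obtain f' where f': "trig_hom m (2 * pi * m * N) f'"
    "\<forall>t. (f has_real_derivative f' t) (at t)" by blast
  have "trig_hom m (2 * pi * m * (\<bar>c\<bar> * N)) (\<lambda>t. c * f' t)"
    using trig_hom.scale[OF f'(1), of c] by (simp add: algebra_simps)
  then show ?case using f'(2) by (intro exI[of _ "\<lambda>t. c * f' t"]) (auto intro!: DERIV_cmult)
next
  case (mono m N f N')
  then obtain f' where f': "trig_hom m (2 * pi * m * N) f'"
    "\<forall>t. (f has_real_derivative f' t) (at t)" by blast
  have "trig_hom m (2 * pi * m * N') f'"
    by (rule trig_hom.mono[OF f'(1)]) (simp add: mono.hyps mult_left_mono)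
  then show ?case using f'(2) by blast
qed

lemma trig_hom_deriv:
  assumes "trig_hom m N f"
  shows "trig_hom m (2 * pi * m * N) (deriv f)" and "(f has_real_derivative deriv f t) (at t)"
proof -
  obtain f' where f': "trig_hom m (2 * pi * m * N) f'" "\<forall>t. (f has_real_derivative f' t) (at t)"
    using trig_hom_has_derivative[OF assms] by blast
  then have "deriv f = f'" by (auto simp: fun_eq_iff intro: DERIV_imp_deriv)
  with f' show "trig_hom m (2 * pi * m * N) (deriv f)" "(f has_real_derivative deriv f t) (at t)"
    by auto
qed

text \<open>d^n/dt^n K (sin (2 \<pi> t)) = (\<Sum>r\<le>n. sin_chain_coeff n r t * K^(r) (sin (2 \<pi> t)));
  the recursion mirrors S(n+1, r) = r S(n, r) + S(n, r-1), whence the bound (2 \<pi>)^n S(n, r).\<close>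
fun sin_chain_coeff :: "nat \<Rightarrow> nat \<Rightarrow> real \<Rightarrow> real" where
  "sin_chain_coeff 0 r = (\<lambda>t. if r = 0 then 1 else 0)"
| "sin_chain_coeff (Suc n) r = (\<lambda>t. deriv (sin_chain_coeff n r) t
      + (if r = 0 then 0 else sin_chain_coeff n (r - 1) t * (2 * pi * cos (2 * pi * t))))"

lemma trig_hom_sin_chain_coeff:
  "trig_hom r ((2 * pi) ^ n * real (Stirling n r)) (sin_chain_coeff n r)"
proof (induction n arbitrary: r)
  case 0
  show ?case
    using trig_hom.const[of 1] trig_hom.zero[of 0 r] by (cases r) simp_all
next
  case (Suc n)
  have d: "trig_hom r (2 * pi * r * ((2 * pi) ^ n * real (Stirling n r)))
      (deriv (sin_chain_coeff n r))"
    by (rule trig_hom_deriv(1)[OF Suc.IH])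
  show ?case
  proof (cases r)
    case 0
    with d show ?thesis by simp
  next
    case (Suc r')
    have "trig_hom r (\<bar>2 * pi\<bar> * ((2 * pi) ^ n * real (Stirling n r')))
        (\<lambda>t. cos (2 * pi * t) * (2 * pi * sin_chain_coeff n r' t))"
      unfolding Suc by (intro trig_hom.cos[where a = 0, simplified] trig_hom.scale Suc.IH)
    with d have "trig_hom r (2 * pi * r * ((2 * pi) ^ n * real (Stirling n r))
        + \<bar>2 * pi\<bar> * ((2 * pi) ^ n * real (Stirling n r')))
        (\<lambda>t. deriv (sin_chain_coeff n r) t + cos (2 * pi * t) * (2 * pi * sin_chain_coeff n r' t))"
      by (rule trig_hom.add)
    then show ?thesis
      using Suc by (simp add: algebra_simps)
  qed
qed

lemma abs_sin_chain_coeff_le: "\<bar>sin_chain_coeff n r t\<bar> \<le> (2 * pi) ^ n * real (Stirling n r)"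
  using trig_hom_bound[OF trig_hom_sin_chain_coeff] .

lemma sin_chain_coeff_has_derivative:
  "(sin_chain_coeff n r has_real_derivative deriv (sin_chain_coeff n r) t) (at t)"
  by (rule trig_hom_deriv(2)[OF trig_hom_sin_chain_coeff])

lemma sin_chain_coeff_eq_0: "n < r \<Longrightarrow> sin_chain_coeff n r = (\<lambda>t. 0)"
proof (induction n arbitrary: r)
  case (Suc n)
  then have "sin_chain_coeff n r = (\<lambda>t. 0)" "sin_chain_coeff n (r - 1) = (\<lambda>t. 0)" by auto
  then show ?case using Suc.prems by simp
qed simp

definition sin_coords :: "(nat \<Rightarrow> real) \<Rightarrow> nat \<Rightarrow> real" where
  "sin_coords y = (\<lambda>j. sin (2 * pi * y j))"

lemma sin_coords_upd: "sin_coords (y(k := t)) = (sin_coords y)(k := sin (2 * pi * t))"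
  unfolding sin_coords_def by auto

lemma sum_sin_chain_coeff_Suc:
  fixes Q :: "nat \<Rightarrow> real" and t :: real
  defines "c \<equiv> 2 * pi * cos (2 * pi * t)"
  shows "(\<Sum>r\<le>n. deriv (sin_chain_coeff n r) t * Q r + sin_chain_coeff n r t * (Q (Suc r) * c))
       = (\<Sum>r\<le>Suc n. sin_chain_coeff (Suc n) r t * Q r)"
proof -
  have "(\<Sum>r\<le>Suc n. sin_chain_coeff (Suc n) r t * Q r)
      = (\<Sum>r\<le>Suc n. deriv (sin_chain_coeff n r) t * Q r)
        + (\<Sum>r\<le>Suc n. (if r = 0 then 0 else sin_chain_coeff n (r - 1) t * c) * Q r)"
    unfolding c_def by (simp add: sum.distrib ring_distribs)
  also have "(\<Sum>r\<le>Suc n. deriv (sin_chain_coeff n r) t * Q r)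
      = (\<Sum>r\<le>n. deriv (sin_chain_coeff n r) t * Q r)"
    using sin_chain_coeff_eq_0[of n "Suc n"] by simp
  also have "(\<Sum>r\<le>Suc n. (if r = 0 then 0 else sin_chain_coeff n (r - 1) t * c) * Q r)
      = (\<Sum>r\<le>n. sin_chain_coeff n r t * (Q (Suc r) * c))"
    by (subst sum.atMost_Suc_shift) (simp add: algebra_simps)
  finally show ?thesis by (simp add: sum.distrib)
qed

lemma sum_PiE_lessThan_Suc:
  "(\<Sum>m\<in>Pi\<^sub>E {..<Suc k} A. f m) = (\<Sum>m\<in>Pi\<^sub>E {..<k} A. \<Sum>r\<in>A k. f (m(k := r)))"
proof -
  have "(\<Sum>m\<in>Pi\<^sub>E {..<Suc k} A. f m) = (\<Sum>(r, m)\<in>A k \<times> Pi\<^sub>E {..<k} A. f (m(k := r)))"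
    unfolding lessThan_Suc PiE_insert_eq
    by (subst sum.reindex) (auto intro: inj_combinator simp: case_prod_beta)
  also have "\<dots> = (\<Sum>m\<in>Pi\<^sub>E {..<k} A. \<Sum>r\<in>A k. f (m(k := r)))"
    by (simp add: sum.cartesian_product[symmetric] sum.swap[of _ "A k"])
  finally show ?thesis .
qed

context smooth_activation begin

lemma has_real_derivative_comp_sin_coords:
  assumes Q: "Q \<in> smooth_funs \<sigma>"
  shows "((\<lambda>t. Q ((sin_coords y)(k := sin (2 * pi * t)))) has_real_derivative
          partial k Q (sin_coords y) * (2 * pi * cos (2 * pi * y k))) (at (y k))"
proof -
  have Q': "((\<lambda>u. Q ((sin_coords y)(k := u))) has_real_derivative partial k Q (sin_coords y))
      (at (sin (2 * pi * y k)))"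
    using has_real_derivative_partial[OF Q, of "sin_coords y" k] by (simp add: sin_coords_def)
  have "((\<lambda>t. sin (2 * pi * t)) has_real_derivative cos (2 * pi * y k) * (2 * pi)) (at (y k))"
    by (auto intro!: derivative_eq_intros)
  from DERIV_chain2[OF Q' this] show ?thesis
    by (simp add: algebra_simps)
qed

lemma has_real_derivative_sin_chain_term:
  assumes Q: "Q \<in> smooth_funs \<sigma>"
  shows "((\<lambda>t. sin_chain_coeff n r t * Q ((sin_coords y)(k := sin (2 * pi * t))))
    has_real_derivative deriv (sin_chain_coeff n r) (y k) * Q (sin_coords y)
      + sin_chain_coeff n r (y k) * (partial k Q (sin_coords y) * (2 * pi * cos (2 * pi * y k))))
    (at (y k))"
proof -
  have upd: "(sin_coords y)(k := sin (2 * pi * y k)) = sin_coords y"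
    by (auto simp: sin_coords_def)
  from DERIV_mult[OF sin_chain_coeff_has_derivative has_real_derivative_comp_sin_coords[OF Q, of y k]]
  show ?thesis unfolding upd by (simp add: algebra_simps)
qed

lemma funpow_partial_comp_sin_coords:
  assumes I: "finite I" and K: "\<And>i. i \<in> I \<Longrightarrow> K i \<in> smooth_funs \<sigma>"
    and c: "\<And>i y t. c i (y(k := t)) = c i y"
  shows "(partial k ^^ n) (\<lambda>y. \<Sum>i\<in>I. c i y * K i (sin_coords y)) =
    (\<lambda>y. \<Sum>i\<in>I. c i y * (\<Sum>r\<le>n. sin_chain_coeff n r (y k) * (partial k ^^ r) (K i) (sin_coords y)))"
proof (induction n)
  case 0
  then show ?case by simp
next
  case (Suc n)
  have K_partials: "(partial k ^^ r) (K i) \<in> smooth_funs \<sigma>" if "i \<in> I" for i r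
    using K[OF that] by (induction r) (auto intro: partial_in_smooth_funs)
  let ?D = "\<lambda>r i. (partial k ^^ r) (K i)"
  show ?case (is "_ = ?rhs")
  proof
    fix y
    have "(partial k ^^ Suc n) (\<lambda>y. \<Sum>i\<in>I. c i y * K i (sin_coords y)) y
        = partial k (\<lambda>y. \<Sum>i\<in>I. c i y * (\<Sum>r\<le>n. sin_chain_coeff n r (y k) * ?D r i (sin_coords y))) y"
      by (simp add: Suc.IH)
    also have "\<dots> = deriv (\<lambda>t. \<Sum>i\<in>I. c i y * (\<Sum>r\<le>n. sin_chain_coeff n r t
        * ?D r i ((sin_coords y)(k := sin (2 * pi * t))))) (y k)"
      by (subst partial_def) (simp add: c sin_coords_upd)
    also have "\<dots> = (\<Sum>i\<in>I. c i y * (\<Sum>r\<le>n. deriv (sin_chain_coeff n r) (y k) * ?D r i (sin_coords y)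
        + sin_chain_coeff n r (y k)
          * (?D (Suc r) i (sin_coords y) * (2 * pi * cos (2 * pi * y k)))))"
      by (intro DERIV_imp_deriv DERIV_sum DERIV_cmult)
         (simp add: has_real_derivative_sin_chain_term K_partials)
    also have "\<dots> = ?rhs y"
      by (subst sum_sin_chain_coeff_Suc[symmetric]) simp
    finally show "(partial k ^^ Suc n) (\<lambda>y. \<Sum>i\<in>I. c i y * K i (sin_coords y)) y = ?rhs y" .
  qed
qed

lemma mderiv_comp_sin_coords:
  assumes K: "K \<in> smooth_funs \<sigma>"
  shows "mderiv k \<nu> (\<lambda>z. K (sin_coords z)) = (\<lambda>y. \<Sum>m\<in>Pi\<^sub>E {..<k} (\<lambda>j. {..\<nu> j}).
    (\<Prod>j<k. sin_chain_coeff (\<nu> j) (m j) (y j)) * mderiv k m K (sin_coords y))"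
proof (induction k)
  case 0
  then show ?case by simp
next
  case (Suc k)
  let ?I = "Pi\<^sub>E {..<k} (\<lambda>j. {..\<nu> j})"
  let ?T = "\<lambda>k m y. \<Prod>j<k. sin_chain_coeff (\<nu> j) (m j) (y j)"
  have "mderiv (Suc k) \<nu> (\<lambda>z. K (sin_coords z))
      = (partial k ^^ \<nu> k) (\<lambda>y. \<Sum>m\<in>?I. ?T k m y * mderiv k m K (sin_coords y))"
    using Suc.IH by simp
  also have "\<dots> = (\<lambda>y. \<Sum>m\<in>?I. ?T k m y *
      (\<Sum>r\<le>\<nu> k. sin_chain_coeff (\<nu> k) r (y k) * (partial k ^^ r) (mderiv k m K) (sin_coords y)))"
    by (rule funpow_partial_comp_sin_coords)
       (auto intro: mderiv_in_smooth_funs K finite_PiE intro!: prod.cong)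
  also have "\<dots> = (\<lambda>y. \<Sum>m\<in>Pi\<^sub>E {..<Suc k} (\<lambda>j. {..\<nu> j}).
      ?T (Suc k) m y * mderiv (Suc k) m K (sin_coords y))"
  proof
    fix y
    have summand_eq: "?T (Suc k) (m(k := r)) y * mderiv (Suc k) (m(k := r)) K (sin_coords y)
        = ?T k m y
          * (sin_chain_coeff (\<nu> k) r (y k) * (partial k ^^ r) (mderiv k m K) (sin_coords y))"
      for m r
    proof -
      have "mderiv k (m(k := r)) K = mderiv k m K" by (rule mderiv_cong) simp
      then show ?thesis by (simp add: lessThan_Suc)
    qed
    show "(\<Sum>m\<in>?I. ?T k m y *
        (\<Sum>r\<le>\<nu> k. sin_chain_coeff (\<nu> k) r (y k) * (partial k ^^ r) (mderiv k m K) (sin_coords y)))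
      = (\<Sum>m\<in>Pi\<^sub>E {..<Suc k} (\<lambda>j. {..\<nu> j}). ?T (Suc k) m y * mderiv (Suc k) m K (sin_coords y))"
      by (simp only: sum_PiE_lessThan_Suc summand_eq sum_distrib_left)
  qed
  finally show ?case .
qed

lemma abs_mderiv_comp_sin_coords_le:
  assumes K: "K \<in> smooth_funs \<sigma>" and B: "\<And>m. \<bar>mderiv s m K (sin_coords y)\<bar> \<le> B m"
  shows "\<bar>mderiv s \<nu> (\<lambda>z. K (sin_coords z)) y\<bar> \<le> (2 * pi) ^ mabs s \<nu>
    * (\<Sum>m\<in>Pi\<^sub>E {..<s} (\<lambda>j. {..\<nu> j}). B m * (\<Prod>j<s. real (Stirling (\<nu> j) (m j))))"
proof -
  let ?I = "Pi\<^sub>E {..<s} (\<lambda>j. {..\<nu> j})"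
  let ?S = "\<lambda>m. \<Prod>j<s. (2 * pi) ^ \<nu> j * real (Stirling (\<nu> j) (m j))"
  have "\<bar>(\<Prod>j<s. sin_chain_coeff (\<nu> j) (m j) (y j)) * mderiv s m K (sin_coords y)\<bar> \<le> ?S m * B m"
    for m
    unfolding abs_mult abs_prod
    by (intro mult_mono prod_mono B abs_sin_chain_coeff_le conjI prod_nonneg) auto
  then have "\<bar>mderiv s \<nu> (\<lambda>z. K (sin_coords z)) y\<bar> \<le> (\<Sum>m\<in>?I. ?S m * B m)"
    unfolding mderiv_comp_sin_coords[OF K] by (intro order_trans[OF sum_abs] sum_mono)
  also have "\<dots> = (2 * pi) ^ mabs s \<nu> * (\<Sum>m\<in>?I. B m * (\<Prod>j<s. real (Stirling (\<nu> j) (m j))))"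
    by (simp add: mabs_def power_sum prod.distrib sum_distrib_left mult_ac)
  finally show ?thesis .
qed

end

locale network = smooth_activation \<sigma> for \<sigma> :: "real \<Rightarrow> real" +
  fixes s L :: nat and d :: "nat \<Rightarrow> nat"
    and W :: "nat \<Rightarrow> nat \<Rightarrow> nat \<Rightarrow> real" and v :: "nat \<Rightarrow> nat \<Rightarrow> real"
    and \<beta> R :: "nat \<Rightarrow> real" and \<xi> \<tau> :: real
  assumes \<beta>_pos: "\<And>j. \<beta> j > 0" and R_pos: "\<And>l. l \<ge> 1 \<Longrightarrow> R l > 0"
    and \<xi>_pos: "\<xi> > 0" and \<tau>_pos: "\<tau> > 0"
    and W0_bound: "\<And>p j. p < d 1 \<Longrightarrow> j < s \<Longrightarrow> \<bar>W 0 p j\<bar> \<le> \<beta> j"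
    and W_row_bound: "\<And>l. 1 \<le> l \<Longrightarrow> l \<le> L \<Longrightarrow>
               Max ((\<lambda>p. \<Sum>q<d l. \<bar>W l p q\<bar>) ` {..<d (Suc l)}) \<le> R l"
    and \<sigma>_bound: "\<And>n x. n \<ge> 1 \<Longrightarrow> \<bar>(deriv ^^ n) \<sigma> x\<bar> \<le> \<xi> * \<tau> ^ n * fact n"
begin

abbreviation G :: "nat \<Rightarrow> (nat \<Rightarrow> real) \<Rightarrow> nat \<Rightarrow> real" where
  "G l y p \<equiv> net (\<lambda>x. x) \<sigma> s d W v l y p"

lemma row_sum_le: "1 \<le> l \<Longrightarrow> l \<le> L \<Longrightarrow> p < d (Suc l) \<Longrightarrow> (\<Sum>q<d l. \<bar>W l p q\<bar>) \<le> R l"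
  using W_row_bound
  by (meson Max_ge finite_imageI finite_lessThan image_eqI lessThan_iff order_trans)

lemma partials_G_0:
  assumes q: "q < d 1" and js: "js \<noteq> []"
  shows "\<bar>partials js (\<lambda>y. G 0 y q) y\<bar> \<le> majorant \<beta> (geom_majorant 1 0) js"
proof -
  obtain js' j where js_eq: "js = js' @ [j]" using js by (cases js rule: rev_cases) auto
  have "partial j (\<lambda>y. (\<Sum>i<s. W 0 q i * y i) + v 0 q)
      = (\<lambda>y. (\<Sum>i<s. W 0 q i * (if i = j then 1 else 0)) + 0)"
    by (simp add: partial_add partial_sum partial_cmult partial_coord partial_const
        smooth_funs_sum smooth_funs.intros)
  also have "\<dots> = (\<lambda>y. if j < s then W 0 q j else 0)"
    by (auto simp: if_distrib cong: if_cong)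
  finally have partial_G_0:
    "partial j (\<lambda>y. (\<Sum>i<s. W 0 q i * y i) + v 0 q) = (\<lambda>y. if j < s then W 0 q j else 0)" .
  have nonneg: "majorant \<beta> (geom_majorant 1 0) js \<ge> 0"
    by (rule majorant_nonneg) (auto simp: geom_majorant_nth less_imp_le \<beta>_pos)
  show ?thesis
  proof (cases "js' = []")
    case True
    have "\<bar>if j < s then W 0 q j else 0\<bar> \<le> \<beta> j"
      using W0_bound[OF q] \<beta>_pos[of j] by simp
    then show ?thesis
      using True by (simp add: js_eq partials_snoc partial_G_0 majorant_def geom_majorant_nth)
  next
    case False
    with nonneg show ?thesis by (simp add: js_eq partials_snoc partial_G_0 partials_const)
  qed
qed

lemma partials_G_Suc_eq:
  assumes "js \<noteq> []"
  shows "partials js (\<lambda>y. G (Suc l) y p)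
    = (\<lambda>y. \<Sum>q<d (Suc l). W (Suc l) p q * partials js (\<lambda>y. \<sigma> (G l y q)) y)"
proof -
  have \<sigma>_G: "(\<lambda>y. \<sigma> (G l y q)) \<in> smooth_funs \<sigma>" for q
    by (rule smooth_funs_comp[OF net_id_in_smooth_funs])
  have "partials js (\<lambda>y. G (Suc l) y p)
      = (\<lambda>y. partials js (\<lambda>y. \<Sum>q<d (Suc l). W (Suc l) p q * \<sigma> (G l y q)) y)"
    by (simp, subst partials_add)
       (auto intro!: smooth_funs_sum smooth_funs.intros \<sigma>_G simp: partials_const[OF assms])
  also have "\<dots> = (\<lambda>y. \<Sum>q<d (Suc l). W (Suc l) p q * partials js (\<lambda>y. \<sigma> (G l y q)) y)"
    by (subst partials_sum) (auto intro!: smooth_funs.intros \<sigma>_G simp: partials_cmult[OF \<sigma>_G])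
  finally show ?thesis .
qed

lemma partials_G_Suc:
  assumes l: "Suc l \<le> L" and P: "P \<ge> 0" and S: "S \<ge> 0"
    and G_bound: "\<And>q js y. q < d (Suc l) \<Longrightarrow> js \<noteq> [] \<Longrightarrow>
      \<bar>partials js (\<lambda>y. G l y q) y\<bar> \<le> majorant \<beta> (geom_majorant P S) js"
    and p: "p < d (Suc (Suc l))" and js: "js \<noteq> []"
  shows "\<bar>partials js (\<lambda>y. G (Suc l) y p) y\<bar>
    \<le> majorant \<beta> (geom_majorant (R (Suc l) * (\<xi> * \<tau> * P)) (S + \<tau> * P)) js"
proof -
  define B where "B = majorant \<beta> (geom_majorant (\<xi> * \<tau> * P) (S + \<tau> * P)) js"
  have B_nonneg: "B \<ge> 0"
    unfolding B_def using P S \<xi>_pos \<tau>_pos \<beta>_pos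
    by (intro majorant_nonneg) (auto simp: geom_majorant_nth less_imp_le)
  have \<sigma>_G_bound: "\<bar>partials js (\<lambda>y. \<sigma> (G l y q)) y\<bar> \<le> B" if "q < d (Suc l)" for q
    unfolding B_def
    by (rule partials_comp_geom_majorant[OF net_id_in_smooth_funs G_bound[OF that] \<sigma>_bound js])
  have "\<bar>partials js (\<lambda>y. G (Suc l) y p) y\<bar>
      = \<bar>\<Sum>q<d (Suc l). W (Suc l) p q * partials js (\<lambda>y. \<sigma> (G l y q)) y\<bar>"
    by (simp only: partials_G_Suc_eq[OF js])
  also have "\<dots> \<le> (\<Sum>q<d (Suc l). \<bar>W (Suc l) p q\<bar> * B)"
    by (rule order_trans[OF sum_abs])
       (auto simp: abs_mult intro!: sum_mono mult_left_mono \<sigma>_G_bound)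
  also have "\<dots> \<le> R (Suc l) * B"
    unfolding sum_distrib_right[symmetric] using row_sum_le[OF _ l p] B_nonneg
    by (intro mult_right_mono) auto
  also have "\<dots> = majorant \<beta> (geom_majorant (R (Suc l) * (\<xi> * \<tau> * P)) (S + \<tau> * P)) js"
    by (simp add: B_def majorant_def geom_majorant_nth)
  finally show ?thesis .
qed

lemma partials_G_majorant:
  "l \<le> L \<Longrightarrow> q < d (Suc l) \<Longrightarrow> js \<noteq> [] \<Longrightarrow>
    \<bar>partials js (\<lambda>y. G l y q) y\<bar> \<le> majorant \<beta> (geom_majorant (Pk \<xi> \<tau> R l) (Sl \<xi> \<tau> R l)) js"
proof (induction l arbitrary: q js y)
  case 0
  then show ?case using partials_G_0 by (simp add: Pk_0 Sl_0)
next
  case (Suc l)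
  have "Pk \<xi> \<tau> R l \<ge> 0" "Sl \<xi> \<tau> R l \<ge> 0"
    using Pk_pos[OF \<xi>_pos \<tau>_pos R_pos] Sl_nonneg[OF \<xi>_pos \<tau>_pos R_pos]
    by (simp_all add: less_imp_le)
  with Suc show ?case
    using partials_G_Suc[of l "Pk \<xi> \<tau> R l" "Sl \<xi> \<tau> R l"] by (simp add: Pk_Suc Sl_Suc)
qed

lemma abs_mderiv_G_le:
  assumes l: "1 \<le> l" "l \<le> L" and p: "p < d (Suc l)"
    and C: "\<bar>G l y p\<bar> \<le> C" "Pk \<xi> \<tau> R l / Sl \<xi> \<tau> R l \<le> C"
  shows "\<bar>mderiv s \<nu> (\<lambda>z. G l z p) y\<bar> \<le> C * fact (mabs s \<nu>) * (\<Prod>j<s. (Sl \<xi> \<tau> R l * \<beta> j) ^ \<nu> j)"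
proof (cases "mabs s \<nu>")
  case 0
  then have "dir_list \<nu> s = []" "\<forall>j<s. \<nu> j = 0"
    using length_dir_list[of \<nu> s] by (auto simp: mabs_def)
  with C 0 show ?thesis by (simp add: mderiv_eq_partials)
next
  case (Suc n)
  define S where "S = Sl \<xi> \<tau> R l"
  have S_pos: "S > 0" unfolding S_def using Sl_pos[OF \<xi>_pos \<tau>_pos R_pos l(1)] .
  have len: "length (dir_list \<nu> s) = Suc n"
    using Suc by (simp add: length_dir_list mabs_def)
  have "\<bar>mderiv s \<nu> (\<lambda>z. G l z p) y\<bar> \<le> majorant \<beta> (geom_majorant (Pk \<xi> \<tau> R l) S) (dir_list \<nu> s)"
    using partials_G_majorant[OF l(2) p, of "dir_list \<nu> s" y] len
    unfolding mderiv_eq_partials S_def by fastforce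
  also have "\<dots> = Pk \<xi> \<tau> R l / S * fact (mabs s \<nu>) * (S ^ mabs s \<nu> * (\<Prod>j<s. \<beta> j ^ \<nu> j))"
    using S_pos by (simp add: majorant_def geom_majorant_nth len prod_list_dir_list Suc field_simps)
  also have "S ^ mabs s \<nu> * (\<Prod>j<s. \<beta> j ^ \<nu> j) = (\<Prod>j<s. (S * \<beta> j) ^ \<nu> j)"
    by (simp add: mabs_def power_mult_distrib prod.distrib power_sum)
  also have "Pk \<xi> \<tau> R l / S * fact (mabs s \<nu>) * \<dots> \<le> C * fact (mabs s \<nu>) * \<dots>"
    using C(2) \<beta>_pos S_pos unfolding S_def
    by (intro mult_right_mono prod_nonneg) (auto intro: less_imp_le)
  finally show ?thesis unfolding S_def .
qed

lemma abs_mderiv_net_id_le: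
  assumes "1 \<le> l" "l \<le> L" "p < d (Suc l)" "y \<in> unit_cube s"
  shows "\<bar>mderiv s \<nu> (\<lambda>z. G l z p) y\<bar>
    \<le> max (net_supnorm s d (G l) l) (Pk \<xi> \<tau> R l / Sl \<xi> \<tau> R l)
      * fact (mabs s \<nu>) * (\<Prod>j<s. (Sl \<xi> \<tau> R l * \<beta> j) ^ \<nu> j)"
proof (rule abs_mderiv_G_le[OF assms(1-3)])
  have "\<forall>y\<in>unit_cube s. \<forall>j<s. \<bar>y j\<bar> \<le> 1"
    by (simp add: unit_cube_def)
  from abs_net_le_net_supnorm[where \<phi> = "\<lambda>x. x" and d = d and l = l and W = W and v = v,
      OF continuous_on_activation this assms(4,3)]
  show "\<bar>G l y p\<bar> \<le> max (net_supnorm s d (G l) l) (Pk \<xi> \<tau> R l / Sl \<xi> \<tau> R l)"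
    by (rule max.coboundedI1)
qed simp

lemma abs_mderiv_net_sin_le:
  assumes "1 \<le> l" "l \<le> L" "p < d (Suc l)" "y \<in> unit_cube s"
  defines "C \<equiv> max (net_supnorm s d (net (\<lambda>x. sin (2 * pi * x)) \<sigma> s d W v l) l)
    (Pk \<xi> \<tau> R l / Sl \<xi> \<tau> R l)"
  shows "\<bar>mderiv s \<nu> (\<lambda>z. net (\<lambda>x. sin (2 * pi * x)) \<sigma> s d W v l z p) y\<bar>
    \<le> C * (2 * pi) ^ mabs s \<nu>
      * (\<Sum>m\<in>Pi\<^sub>E {..<s} (\<lambda>j. {..\<nu> j}). fact (mabs s m) * (\<Prod>j<s. (Sl \<xi> \<tau> R l * \<beta> j) ^ m j)
          * (\<Prod>j<s. real (Stirling (\<nu> j) (m j))))"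
proof -
  have net_sin: "net (\<lambda>x. sin (2 * pi * x)) \<sigma> s d W v l z q = G l (sin_coords z) q" for z q
    unfolding net_eq_net_id[of "\<lambda>x. sin (2 * pi * x)"] sin_coords_def ..
  have "\<forall>y\<in>unit_cube s. \<forall>j<s. \<bar>sin (2 * pi * y j)\<bar> \<le> 1"
    by simp
  from abs_net_le_net_supnorm[where \<phi> = "\<lambda>x. sin (2 * pi * x)"
      and d = d and l = l and W = W and v = v,
      OF continuous_on_activation this assms(4,3)]
  have "\<bar>G l (sin_coords y) p\<bar> \<le> C"
    unfolding C_def net_sin by (rule max.coboundedI1)
  then have "\<bar>mderiv s m (\<lambda>z. G l z p) (sin_coords y)\<bar>
      \<le> C * fact (mabs s m) * (\<Prod>j<s. (Sl \<xi> \<tau> R l * \<beta> j) ^ m j)" for m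
    by (rule abs_mderiv_G_le[OF assms(1-3)]) (simp add: C_def)
  from abs_mderiv_comp_sin_coords_le[OF net_id_in_smooth_funs this]
  show ?thesis
    unfolding net_sin by (simp add: sum_distrib_left mult_ac)
qed

end

theorem theorem2p2:
  fixes s L :: nat and d :: "nat \<Rightarrow> nat"
    and W :: "nat \<Rightarrow> nat \<Rightarrow> nat \<Rightarrow> real" and v :: "nat \<Rightarrow> nat \<Rightarrow> real"
    and \<sigma> :: "real \<Rightarrow> real" and \<beta> R :: "nat \<Rightarrow> real" and \<xi> \<tau> :: real
  assumes s: "s \<ge> 1" and L: "L \<ge> 1"
    and d0: "d 0 = s" and dpos: "\<forall>k\<le>Suc L. d k \<ge> 1"
    and smooth: "\<forall>n x. ((deriv ^^ n) \<sigma> has_real_derivative (deriv ^^ Suc n) \<sigma> x) (at x)"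
    and \<beta>pos: "\<forall>j. \<beta> j > 0" and Rpos: "\<forall>l\<ge>1. R l > 0"
    and \<xi>: "\<xi> > 0" and \<tau>: "\<tau> > 0"
    and W0: "\<forall>p<d 1. \<forall>j<s. \<bar>W 0 p j\<bar> \<le> \<beta> j"
    and Wl: "\<forall>l. 1 \<le> l \<and> l \<le> L \<longrightarrow>
               Max ((\<lambda>p. \<Sum>q<d l. \<bar>W l p q\<bar>) ` {..<d (Suc l)}) \<le> R l"
    and \<sigma>bd: "\<forall>n\<ge>1. \<forall>x. \<bar>(deriv ^^ n) \<sigma> x\<bar> \<le> \<xi> * \<tau> ^ n * fact n"
  shows
   "(\<forall>l p \<nu> y. 1 \<le> l \<and> l \<le> L \<and> p < d (Suc l) \<and> y \<in> unit_cube s \<longrightarrow>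
      \<bar>mderiv s \<nu> (\<lambda>z. net (\<lambda>x. x) \<sigma> s d W v l z p) y\<bar>
        \<le> max (net_supnorm s d (net (\<lambda>x. x) \<sigma> s d W v l) l)
               (Pk \<xi> \<tau> R l / Sl \<xi> \<tau> R l)
          * fact (mabs s \<nu>) * (\<Prod>j<s. (Sl \<xi> \<tau> R l * \<beta> j) ^ \<nu> j))
    \<and>
    (\<forall>l p \<nu> y. 1 \<le> l \<and> l \<le> L \<and> p < d (Suc l) \<and> y \<in> unit_cube s \<longrightarrow>
      \<bar>mderiv s \<nu> (\<lambda>z. net (\<lambda>x. sin (2 * pi * x)) \<sigma> s d W v l z p) y\<bar>
        \<le> max (net_supnorm s d (net (\<lambda>x. sin (2 * pi * x)) \<sigma> s d W v l) l)
               (Pk \<xi> \<tau> R l / Sl \<xi> \<tau> R l)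
          * (2 * pi) ^ mabs s \<nu>
          * (\<Sum>m\<in>Pi\<^sub>E {..<s} (\<lambda>j. {..\<nu> j}).
               fact (mabs s m) * (\<Prod>j<s. (Sl \<xi> \<tau> R l * \<beta> j) ^ m j)
               * (\<Prod>j<s. real (Stirling (\<nu> j) (m j)))))"
proof -
  interpret network \<sigma> s L d W v \<beta> R \<xi> \<tau>
    using assms by unfold_locales auto
  show ?thesis
    using abs_mderiv_net_id_le abs_mderiv_net_sin_le by blast
qed

end
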